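(* For $2\le k\le n$, $$d(n,k-1)=\sum_{a=1}^{k-1}\binom{k-1}{a}\,d(a,a)\,d(n-a,k-a).$$
   Context: A decreasing planar tree on a finite set $V\subseteq\mathbb N$ is a rooted planar tree (children of each node totally ordered) with node set $V$ such that every node is larger than all of its descendants (so the root is $\max V$). For such a tree $T$, $L(T)$ is the largest leaf of $T$. For $n\ge1$, $d(n,k)$ denotes the number of decreasing planar trees $T$ on $[1,n]$ with $L(T)\le k$ (so $d(n,k)=0$ if $k\notin[1,n]$, and $d(1,1)=1$). *)

theory Defs
  imports Main
begin

datatype ptree = Node nat "ptree list"

fun labels :: "ptree \<Rightarrow> nat list" where
  "labels (Node v ts) = v # concat (map labels ts)"

fun decreasing :: "ptree \<Rightarrow> bool" where
  "decreasing (Node v ts) =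
     (\<forall>t\<in>set ts. decreasing t \<and> (\<forall>u\<in>set (labels t). u < v))"

fun leaves :: "ptree \<Rightarrow> nat list" where
  "leaves (Node v ts) = (if ts = [] then [v] else concat (map leaves ts))"

definition largest_leaf :: "ptree \<Rightarrow> nat" where
  "largest_leaf T = Max (set (leaves T))"

definition dec_planar_trees :: "nat set \<Rightarrow> ptree set" where
  "dec_planar_trees V =
     {T. decreasing T \<and> distinct (labels T) \<and> set (labels T) = V}"

text \<open>d(n,k): number of decreasing planar trees on [1,n] with L(T) \<le> k;
by convention 0 when k is not in [1,n].\<close>
definition d :: "nat \<Rightarrow> nat \<Rightarrow> nat" where
  "d n k = (if 1 \<le> k \<and> k \<le> n
            then card {T \<in> dec_planar_trees {1..n}. largest_leaf T \<le> k}
            else 0)"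

end

theory Submission
  imports Defs "HOL-Library.Multiset"
begin

(* If L(T) <= k - 1, the node k of T is not a leaf. Detaching its first subtree S, whose label
   set A lies in [1,k-1], leaves a decreasing planar tree on [1,n] - A in which k may have
   become a leaf, so its largest leaf is at most k; grafting S back as the first child of k
   inverts this. Relabelling by rank identifies the trees on A with those on [1,|A|], and the
   trees on [1,n] - A with largest leaf at most k with those on [1,n - |A|] with largest leaf
   at most k - |A|. Grouping the subsets A of [1,k-1] by size yields the binomial
   coefficients. *)

lemma labels_not_Nil: "labels T \<noteq> []"
  by (cases T) auto

lemma leaves_not_Nil: "leaves T \<noteq> []"
proof (induction T)
  case (Node v ts)
  then show ?case by (cases ts) auto
qed

lemma set_leaves_subset_labels: "set (leaves T) \<subseteq> set (labels T)"
  by (induction T) auto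

lemma largest_leaf_in_leaves: "largest_leaf T \<in> set (leaves T)"
  unfolding largest_leaf_def using leaves_not_Nil by (intro Max_in) auto

lemma largest_leaf_in_labels: "largest_leaf T \<in> set (labels T)"
  using largest_leaf_in_leaves set_leaves_subset_labels by blast

lemma largest_leaf_le_iff: "largest_leaf T \<le> x \<longleftrightarrow> (\<forall>u\<in>set (leaves T). u \<le> x)"
  unfolding largest_leaf_def using leaves_not_Nil by (subst Max_le_iff) auto

lemma largest_leaf_less_iff: "largest_leaf T < x \<longleftrightarrow> (\<forall>u\<in>set (leaves T). u < x)"
  unfolding largest_leaf_def using leaves_not_Nil by (subst Max_less_iff) auto

lemma dec_planar_trees_empty: "dec_planar_trees {} = {}"
  using labels_not_Nil by (auto simp: dec_planar_trees_def)

lemma length_le_length_concat_labels: "length ts \<le> length (concat (map labels ts))"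
proof (induction ts)
  case (Cons t ts)
  then show ?case using labels_not_Nil[of t] by (cases "labels t") auto
qed simp

lemma length_labels_le_length_concat:
  "t \<in> set ts \<Longrightarrow> length (labels t) \<le> length (concat (map labels ts))"
  by (induction ts) auto

lemma finite_trees_bounded_size:
  assumes "finite V"
  shows "finite {T. set (labels T) \<subseteq> V \<and> length (labels T) \<le> m}"
proof (induction m)
  case 0
  then show ?case using labels_not_Nil by simp
next
  case (Suc m)
  let ?B = "{T. set (labels T) \<subseteq> V \<and> length (labels T) \<le> m}"
  have "{T. set (labels T) \<subseteq> V \<and> length (labels T) \<le> Suc m}
     \<subseteq> case_prod Node ` (V \<times> {ts. set ts \<subseteq> ?B \<and> length ts \<le> m})"
  proof
    fix T assume T: "T \<in> {T. set (labels T) \<subseteq> V \<and> length (labels T) \<le> Suc m}"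
    obtain v ts where T_eq: "T = Node v ts" by (cases T)
    have children_size: "length (concat (map labels ts)) \<le> m" using T T_eq by simp
    have "set ts \<subseteq> ?B"
      using T T_eq children_size length_labels_le_length_concat[of _ ts] by fastforce
    moreover have "length ts \<le> m"
      using children_size length_le_length_concat_labels[of ts] by simp
    moreover have "v \<in> V" using T T_eq by simp
    ultimately show "T \<in> case_prod Node ` (V \<times> {ts. set ts \<subseteq> ?B \<and> length ts \<le> m})"
      using T_eq by blast
  qed
  moreover have "finite {ts. set ts \<subseteq> ?B \<and> length ts \<le> m}"
    using Suc by (intro finite_lists_length_le)
  ultimately show ?case using assms by (meson finite_SigmaI finite_imageI finite_subset)
qed

lemma finite_dec_planar_trees:
  assumes "finite V"
  shows "finite (dec_planar_trees V)"
proof (rule finite_subset[OF _ finite_trees_bounded_size[OF assms, of "card V"]])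
  show "dec_planar_trees V \<subseteq> {T. set (labels T) \<subseteq> V \<and> length (labels T) \<le> card V}"
    by (auto simp: dec_planar_trees_def dest: distinct_card)
qed

section \<open>Order-preserving relabelling\<close>

fun map_labels :: "(nat \<Rightarrow> nat) \<Rightarrow> ptree \<Rightarrow> ptree" where
  "map_labels h (Node v ts) = Node (h v) (map (map_labels h) ts)"

lemma labels_map_labels: "labels (map_labels h T) = map h (labels T)"
  by (induction T) (auto simp: map_concat intro!: arg_cong[where f=concat])

lemma leaves_map_labels: "leaves (map_labels h T) = map h (leaves T)"
  by (induction T) (auto simp: map_concat intro!: arg_cong[where f=concat])

lemma map_labels_map_labels: "map_labels g (map_labels h T) = map_labels (g \<circ> h) T"
  by (induction T) auto

lemma map_labels_idI: "(\<And>x. x \<in> set (labels T) \<Longrightarrow> f x = x) \<Longrightarrow> map_labels f T = T"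
  by (induction T) (auto intro: map_idI)

lemma decreasing_map_labels:
  "strict_mono_on (set (labels T)) h \<Longrightarrow> decreasing (map_labels h T) = decreasing T"
proof (induction T)
  case (Node v ts)
  have "decreasing (map_labels h t) = decreasing t" if "t \<in> set ts" for t
    using Node that by (auto intro: monotone_on_subset)
  moreover have "h u < h v \<longleftrightarrow> u < v" if "t \<in> set ts" "u \<in> set (labels t)" for t u
    using that by (subst strict_mono_on_less[OF Node.prems]) auto
  ultimately show ?case by (auto simp: labels_map_labels)
qed

lemma largest_leaf_map_labels:
  assumes "strict_mono_on (set (labels T)) h"
  shows "largest_leaf (map_labels h T) = h (largest_leaf T)"
  unfolding largest_leaf_def leaves_map_labels set_map
proof (rule Max_eqI)
  fix y assume "y \<in> h ` set (leaves T)"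
  then obtain u where u: "u \<in> set (leaves T)" and y: "y = h u" by blast
  have "u \<le> largest_leaf T" using u by (simp add: largest_leaf_def)
  then show "y \<le> h (Max (set (leaves T)))"
    unfolding y largest_leaf_def[symmetric]
    using u largest_leaf_in_labels[of T] set_leaves_subset_labels[of T]
    by (subst strict_mono_on_less_eq[OF assms]) auto
qed (use largest_leaf_in_leaves[of T] in \<open>auto simp: largest_leaf_def\<close>)

lemma map_labels_in_dec_planar_trees:
  assumes "strict_mono_on V h" "T \<in> dec_planar_trees V"
  shows "map_labels h T \<in> dec_planar_trees (h ` V)"
  using assms strict_mono_on_imp_inj_on[OF assms(1)]
  by (auto simp: dec_planar_trees_def labels_map_labels distinct_map decreasing_map_labels)

lemma bij_betw_map_labels:
  assumes mono: "strict_mono_on V h"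
  shows "bij_betw (map_labels h) (dec_planar_trees V) (dec_planar_trees (h ` V))"
proof -
  define g where "g = the_inv_into V h"
  have inj: "inj_on h V" using strict_mono_on_imp_inj_on[OF mono] .
  have g_h: "g (h x) = x" if "x \<in> V" for x
    using inj that by (simp add: g_def the_inv_into_f_f)
  have h_g: "h (g y) = y" if "y \<in> h ` V" for y
    using inj that by (simp add: g_def f_the_inv_into_f)
  have "strict_mono_on (h ` V) g"
    using mono by (auto intro!: strict_mono_onI simp: g_h strict_mono_on_less)
  moreover have "g ` h ` V = V" using g_h by force
  ultimately have g_in: "map_labels g T \<in> dec_planar_trees V" if "T \<in> dec_planar_trees (h ` V)" for T
    using map_labels_in_dec_planar_trees[OF _ that] by metis
  show ?thesis
  proof (rule bij_betw_byWitness[where f' = "map_labels g"])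
    show "\<forall>T\<in>dec_planar_trees V. map_labels g (map_labels h T) = T"
      by (auto simp: map_labels_map_labels g_h dec_planar_trees_def intro: map_labels_idI)
    show "\<forall>T\<in>dec_planar_trees (h ` V). map_labels h (map_labels g T) = T"
      by (auto simp: map_labels_map_labels h_g dec_planar_trees_def intro: map_labels_idI)
  qed (use map_labels_in_dec_planar_trees[OF mono] g_in in auto)
qed

lemma card_largest_leaf_le_map_labels:
  assumes mono: "strict_mono_on V h" and "x \<in> V"
  shows "card {T \<in> dec_planar_trees V. largest_leaf T \<le> x}
       = card {T \<in> dec_planar_trees (h ` V). largest_leaf T \<le> h x}"
proof (rule bij_betw_same_card, rule bij_betw_Collect[OF bij_betw_map_labels[OF mono]])
  fix T assume T: "T \<in> dec_planar_trees V"
  then have "strict_mono_on (set (labels T)) h" "largest_leaf T \<in> V"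
    using mono largest_leaf_in_labels[of T] by (auto simp: dec_planar_trees_def)
  then show "largest_leaf (map_labels h T) \<le> h x \<longleftrightarrow> largest_leaf T \<le> x"
    using mono \<open>x \<in> V\<close> by (simp add: largest_leaf_map_labels strict_mono_on_less_eq)
qed

definition rank :: "nat set \<Rightarrow> nat \<Rightarrow> nat" where
  "rank V x = card {y \<in> V. y \<le> x}"

lemma strict_mono_on_rank:
  assumes "finite V"
  shows "strict_mono_on V (rank V)"
proof (rule strict_mono_onI)
  fix r s assume "r \<in> V" "s \<in> V" "r < s"
  then have "{y \<in> V. y \<le> r} \<subset> {y \<in> V. y \<le> s}" by force
  then show "rank V r < rank V s" unfolding rank_def using assms by (intro psubset_card_mono) auto
qed

lemma rank_image:
  assumes "finite V"
  shows "rank V ` V = {1..card V}"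
proof (rule card_subset_eq)
  show "rank V ` V \<subseteq> {1..card V}"
    using assms by (auto simp: rank_def Suc_le_eq card_gt_0_iff intro: card_mono)
  show "card (rank V ` V) = card {1..card V}"
    using strict_mono_on_imp_inj_on[OF strict_mono_on_rank[OF assms]] by (simp add: card_image)
qed simp

lemma card_largest_leaf_le_eq_d:
  assumes "finite V" "x \<in> V"
  shows "card {T \<in> dec_planar_trees V. largest_leaf T \<le> x} = d (card V) (rank V x)"
  using card_largest_leaf_le_map_labels[OF strict_mono_on_rank[OF assms(1)] assms(2)]
    rank_image[OF assms(1)] assms(2)
  by (auto simp: d_def)

lemma card_dec_planar_trees_eq_d:
  assumes "finite A"
  shows "card (dec_planar_trees A) = d (card A) (card A)"
proof (cases "A = {}")
  case False
  have "dec_planar_trees A = {T \<in> dec_planar_trees A. largest_leaf T \<le> Max A}"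
    using assms largest_leaf_in_labels by (auto simp: dec_planar_trees_def)
  moreover have "rank A (Max A) = card A"
    using assms False by (auto simp: rank_def intro: arg_cong[where f=card])
  ultimately show ?thesis
    using card_largest_leaf_le_eq_d[of A "Max A"] assms False by simp
qed (simp add: d_def dec_planar_trees_empty)

section \<open>Grafting and pruning at a node\<close>

fun graft :: "nat \<Rightarrow> ptree \<Rightarrow> ptree \<Rightarrow> ptree" where
  "graft k S (Node v ts) =
     (if v = k then Node v (S # map (graft k S) ts) else Node v (map (graft k S) ts))"

fun prune :: "nat \<Rightarrow> ptree \<Rightarrow> ptree" where
  "prune k (Node v []) = Node v []"
| "prune k (Node v (t # ts)) =
     (if v = k then Node v (map (prune k) ts) else Node v (prune k t # map (prune k) ts))"

(* A list, since without distinct labels several nodes may carry the label k. *)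
fun pruned_subtrees :: "nat \<Rightarrow> ptree \<Rightarrow> ptree list" where
  "pruned_subtrees k (Node v []) = []"
| "pruned_subtrees k (Node v (t # ts)) =
     (if v = k then t # concat (map (pruned_subtrees k) ts)
      else pruned_subtrees k t @ concat (map (pruned_subtrees k) ts))"

lemma graft_not_in_labels: "k \<notin> set (labels T) \<Longrightarrow> graft k S T = T"
  by (induction T) (auto intro: map_idI)

lemma prune_not_in_labels: "k \<notin> set (labels T) \<Longrightarrow> prune k T = T"
  by (induction k T rule: prune.induct) (auto intro: map_idI)

lemma pruned_subtrees_not_in_labels: "k \<notin> set (labels T) \<Longrightarrow> pruned_subtrees k T = []"
  by (induction k T rule: pruned_subtrees.induct) auto

lemma prune_Node_neq: "v \<noteq> k \<Longrightarrow> prune k (Node v ts) = Node v (map (prune k) ts)"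
  by (cases ts) auto

lemma pruned_subtrees_Node_neq:
  "v \<noteq> k \<Longrightarrow> pruned_subtrees k (Node v ts) = concat (map (pruned_subtrees k) ts)"
  by (cases ts) auto

lemma prune_graft: "prune k (graft k S T) = T"
proof (induction T)
  case (Node v ts)
  then show ?case by (cases ts) (simp_all add: map_idI)
qed

lemma mset_labels_prune:
  "mset (labels T) = mset (labels (prune k T)) + mset (concat (map labels (pruned_subtrees k T)))"
proof (induction k T rule: prune.induct)
  case (2 k v t ts)
  have IH: "\<And>u. u \<in> set ts \<Longrightarrow> mset (labels u) =
      mset (labels (prune k u)) + mset (concat (map labels (pruned_subtrees k u)))"
    using 2 by auto
  have "mset (concat (map labels ts)) =
      mset (concat (map labels (map (prune k) ts))) +
      mset (concat (map labels (concat (map (pruned_subtrees k) ts))))"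
    using IH by (induction ts) auto
  then show ?case using 2 by (cases "v = k") simp_all
qed simp

lemma split_list_unique_label:
  assumes "distinct (concat (map labels ts))" "t \<in> set ts" "k \<in> set (labels t)"
  obtains xs ys where "ts = xs @ t # ys"
    "\<forall>u\<in>set xs. k \<notin> set (labels u)" "\<forall>u\<in>set ys. k \<notin> set (labels u)"
proof -
  obtain xs ys where ts: "ts = xs @ t # ys" using split_list[OF assms(2)] by blast
  moreover have "\<forall>u\<in>set xs. k \<notin> set (labels u)" "\<forall>u\<in>set ys. k \<notin> set (labels u)"
    using assms(1,3) unfolding ts by (fastforce simp: distinct_append)+
  ultimately show ?thesis by (rule that)
qed

lemma map_not_in_labels:
  assumes "\<forall>u\<in>set us. k \<notin> set (labels u)"
  shows "map (graft k S) us = us" "map (prune k) us = us"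
    "concat (map (pruned_subtrees k) us) = []"
  using assms
  by (auto intro: map_idI graft_not_in_labels prune_not_in_labels pruned_subtrees_not_in_labels)

lemma pruned_subtrees_graft:
  "k \<notin> set (labels S) \<Longrightarrow> distinct (labels T) \<Longrightarrow> k \<in> set (labels T) \<Longrightarrow>
   pruned_subtrees k (graft k S T) = [S]"
proof (induction T)
  case (Node v ts)
  show ?case
  proof (cases "v = k")
    case True
    then have "\<forall>u\<in>set ts. k \<notin> set (labels u)" using Node.prems by auto
    then show ?thesis using True by (simp add: map_not_in_labels)
  next
    case False
    with Node.prems obtain t where t: "t \<in> set ts" "k \<in> set (labels t)" by auto
    moreover have "distinct (concat (map labels ts))" using Node.prems by simp
    ultimately obtain xs ys where ts: "ts = xs @ t # ys"
      and xs: "\<forall>u\<in>set xs. k \<notin> set (labels u)" and ys: "\<forall>u\<in>set ys. k \<notin> set (labels u)"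
      using split_list_unique_label by metis
    have "pruned_subtrees k (graft k S t) = [S]"
      using Node t ts by auto
    then show ?thesis using False unfolding ts
      by (simp add: map_not_in_labels[OF xs] map_not_in_labels[OF ys] pruned_subtrees_Node_neq
          del: concat_eq_Nil_conv)
  qed
qed

lemma graft_prune:
  assumes "distinct (labels T)" "k \<in> set (labels T)" "k \<notin> set (leaves T)"
  shows "\<exists>S. pruned_subtrees k T = [S] \<and> graft k S (prune k T) = T"
  using assms
proof (induction T)
  case (Node v ts)
  show ?case
  proof (cases "v = k")
    case True
    then obtain t ts' where ts: "ts = t # ts'" using Node.prems by (cases ts) auto
    then have "\<forall>u\<in>set ts'. k \<notin> set (labels u)" using Node.prems True by auto
    then show ?thesis using True ts by (simp add: map_not_in_labels)
  next
    case False
    with Node.prems obtain t where t: "t \<in> set ts" "k \<in> set (labels t)" by auto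
    moreover have "distinct (concat (map labels ts))" using Node.prems by simp
    ultimately obtain xs ys where ts: "ts = xs @ t # ys"
      and xs: "\<forall>u\<in>set xs. k \<notin> set (labels u)" and ys: "\<forall>u\<in>set ys. k \<notin> set (labels u)"
      using split_list_unique_label by metis
    have "k \<notin> set (leaves t)" using Node.prems t by (auto split: if_splits)
    moreover have "distinct (labels t)" using Node.prems unfolding ts by (simp add: distinct_append)
    ultimately obtain S where "pruned_subtrees k t = [S]" "graft k S (prune k t) = t"
      using Node.IH[OF t(1)] t(2) by blast
    then show ?thesis using False unfolding ts
      by (simp add: map_not_in_labels[OF xs] map_not_in_labels[OF ys] pruned_subtrees_Node_neq
          prune_Node_neq del: concat_eq_Nil_conv)
  qed
qed

lemma mset_labels_graft:
  assumes "k \<notin> set (labels S)" "distinct (labels T)" "k \<in> set (labels T)"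
  shows "mset (labels (graft k S T)) = mset (labels T) + mset (labels S)"
  using mset_labels_prune[of "graft k S T" k] pruned_subtrees_graft[OF assms]
  by (simp add: prune_graft)

lemma set_labels_graft_subset: "set (labels (graft k S T)) \<subseteq> set (labels T) \<union> set (labels S)"
  by (induction T) auto

lemma decreasing_graft:
  "decreasing T \<Longrightarrow> decreasing S \<Longrightarrow> \<forall>u\<in>set (labels S). u < k \<Longrightarrow>
   decreasing (graft k S T)"
proof (induction T)
  case (Node v ts)
  have "decreasing (graft k S t) \<and> (\<forall>u\<in>set (labels (graft k S t)). u < v)"
    if t: "t \<in> set ts" for t
  proof (cases "k \<in> set (labels t)")
    case True
    then have "k < v" using Node.prems t by auto
    then show ?thesis using Node.IH[OF t] Node.prems t set_labels_graft_subset[of k S t] by fastforce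
  next
    case False
    then show ?thesis using Node.prems t by (simp add: graft_not_in_labels)
  qed
  then show ?case using Node.prems by auto
qed

lemma set_leaves_graft_subset:
  "set (leaves (graft k S T)) \<subseteq> (set (leaves T) - {k}) \<union> set (leaves S)"
proof (induction T)
  case (Node v ts)
  then show ?case using leaves_not_Nil[of S] by (cases "ts = []") auto
qed

lemma set_labels_prune_subset: "set (labels (prune k T)) \<subseteq> set (labels T)"
  using mset_labels_prune[of T k] by (metis Un_upper1 set_mset_mset set_mset_union)

lemma decreasing_prune: "decreasing T \<Longrightarrow> decreasing (prune k T)"
  by (induction k T rule: prune.induct) (use set_labels_prune_subset in fastforce)+

lemma set_leaves_prune_subset: "set (leaves (prune k T)) \<subseteq> set (leaves T) \<union> {k}"
proof (induction k T rule: prune.induct)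
  case (2 k v t ts)
  then show ?case by (cases "v = k"; cases "ts = []") auto
qed simp

lemma pruned_subtrees_decreasing:
  "decreasing T \<Longrightarrow> S \<in> set (pruned_subtrees k T) \<Longrightarrow>
   decreasing S \<and> (\<forall>u\<in>set (labels S). u < k)"
  by (induction k T rule: pruned_subtrees.induct) (auto split: if_splits)

section \<open>Counting trees whose leaves lie below k\<close>

lemma graft_in_dec_planar_trees:
  assumes S: "S \<in> dec_planar_trees A" and A: "A \<subseteq> {x \<in> V. x < k}"
    and T: "T \<in> dec_planar_trees (V - A)" and "k \<in> V" and T_leaf: "largest_leaf T \<le> k"
  shows "graft k S T \<in> dec_planar_trees V" and "largest_leaf (graft k S T) < k"
proof -
  have S_props: "set (labels S) = A" "distinct (labels S)" "decreasing S"
    and T_props: "set (labels T) = V - A" "distinct (labels T)" "decreasing T"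
    using S T by (auto simp: dec_planar_trees_def)
  have S_below: "\<forall>u\<in>set (labels S). u < k" using A S_props(1) by auto
  have "k \<in> set (labels T)" using \<open>k \<in> V\<close> S_below S_props(1) T_props(1) by auto
  then have mset_eq: "mset (labels (graft k S T)) = mset (labels T @ labels S)"
    using mset_labels_graft S_below T_props(2) by auto
  have "distinct (labels T @ labels S)" using S_props T_props by auto
  then have "distinct (labels (graft k S T))"
    using mset_eq_imp_distinct_iff[OF mset_eq] by simp
  moreover have "set (labels (graft k S T)) = V"
    using mset_eq_setD[OF mset_eq] S_props(1) T_props(1) A by auto
  moreover have "decreasing (graft k S T)"
    using decreasing_graft T_props(3) S_props(3) S_below by blast
  ultimately show "graft k S T \<in> dec_planar_trees V" by (simp add: dec_planar_trees_def)
  have "\<forall>u\<in>set (leaves T) - {k}. u < k" using T_leaf by (auto simp: largest_leaf_le_iff)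
  moreover have "\<forall>u\<in>set (leaves S). u < k" using S_below set_leaves_subset_labels by blast
  ultimately show "largest_leaf (graft k S T) < k"
    using set_leaves_graft_subset[of k S T] by (auto simp: largest_leaf_less_iff)
qed

lemma dec_planar_tree_decompose:
  assumes T: "T \<in> dec_planar_trees V" and "k \<in> V" and T_leaf: "largest_leaf T < k"
  obtains S where "pruned_subtrees k T = [S]" "graft k S (prune k T) = T"
    "S \<in> dec_planar_trees (set (labels S))" "set (labels S) \<subseteq> {x \<in> V. x < k}"
    "prune k T \<in> dec_planar_trees (V - set (labels S))" "largest_leaf (prune k T) \<le> k"
proof -
  have T_props: "set (labels T) = V" "distinct (labels T)" "decreasing T"
    using T by (auto simp: dec_planar_trees_def)
  have "k \<notin> set (leaves T)" using T_leaf by (auto simp: largest_leaf_less_iff)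
  then obtain S where S: "pruned_subtrees k T = [S]" "graft k S (prune k T) = T"
    using graft_prune T_props \<open>k \<in> V\<close> by blast
  have mset_eq: "mset (labels T) = mset (labels (prune k T) @ labels S)"
    using mset_labels_prune[of T k] S(1) by simp
  have distinct: "distinct (labels (prune k T) @ labels S)"
    using mset_eq_imp_distinct_iff[OF mset_eq] T_props(2) by simp
  have V_eq: "V = set (labels (prune k T)) \<union> set (labels S)"
    using mset_eq_setD[OF mset_eq] T_props(1) by simp
  have S_props: "decreasing S" "\<forall>u\<in>set (labels S). u < k"
    using pruned_subtrees_decreasing[OF T_props(3), of S k] S(1) by simp_all
  show ?thesis
  proof (rule that[OF S])
    show "S \<in> dec_planar_trees (set (labels S))"
      using S_props distinct by (simp add: dec_planar_trees_def)
    show "set (labels S) \<subseteq> {x \<in> V. x < k}" using S_props V_eq by auto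
    show "prune k T \<in> dec_planar_trees (V - set (labels S))"
      using distinct V_eq decreasing_prune[OF T_props(3)] by (auto simp: dec_planar_trees_def)
    show "largest_leaf (prune k T) \<le> k"
      using T_leaf set_leaves_prune_subset[of k T]
      by (fastforce simp: largest_leaf_less_iff largest_leaf_le_iff)
  qed
qed

lemma bij_betw_graft:
  assumes "k \<in> V"
  shows "bij_betw (\<lambda>(A, S, T). graft k S T)
     (SIGMA A:Pow {x \<in> V. x < k}.
        dec_planar_trees A \<times> {T \<in> dec_planar_trees (V - A). largest_leaf T \<le> k})
     {T \<in> dec_planar_trees V. largest_leaf T < k}"
    (is "bij_betw ?graft ?Sigma ?P")
proof -
  define detach where
    "detach T = (set (labels (hd (pruned_subtrees k T))), hd (pruned_subtrees k T), prune k T)"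
    for T
  show ?thesis
  proof (rule bij_betw_byWitness[where f' = detach])
    show "\<forall>x\<in>?Sigma. detach (?graft x) = x"
    proof
      fix x assume "x \<in> ?Sigma"
      then obtain A S T where x: "x = (A, S, T)" "A \<subseteq> {x \<in> V. x < k}"
        "S \<in> dec_planar_trees A" "T \<in> dec_planar_trees (V - A)"
        by blast
      then have "k \<notin> set (labels S)" "distinct (labels T)" "k \<in> set (labels T)"
        "set (labels S) = A"
        using \<open>k \<in> V\<close> by (auto simp: dec_planar_trees_def)
      then show "detach (?graft x) = x"
        by (simp add: x detach_def pruned_subtrees_graft prune_graft)
    qed
    show "\<forall>T\<in>?P. ?graft (detach T) = T"
    proof
      fix T assume "T \<in> ?P"
      then obtain S where "pruned_subtrees k T = [S]" "graft k S (prune k T) = T"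
        using dec_planar_tree_decompose[OF _ assms] by blast
      then show "?graft (detach T) = T" by (simp add: detach_def)
    qed
    show "?graft ` ?Sigma \<subseteq> ?P"
    proof
      fix y assume "y \<in> ?graft ` ?Sigma"
      then obtain A S T where "y = graft k S T" "A \<subseteq> {x \<in> V. x < k}"
        "S \<in> dec_planar_trees A" "T \<in> dec_planar_trees (V - A)" "largest_leaf T \<le> k"
        by auto
      then show "y \<in> ?P" using graft_in_dec_planar_trees[OF _ _ _ assms] by blast
    qed
    show "detach ` ?P \<subseteq> ?Sigma"
    proof
      fix y assume "y \<in> detach ` ?P"
      then obtain T where "y = detach T" "T \<in> ?P" by blast
      then obtain S where "y = detach T" "pruned_subtrees k T = [S]"
        "S \<in> dec_planar_trees (set (labels S))" "set (labels S) \<subseteq> {x \<in> V. x < k}"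
        "prune k T \<in> dec_planar_trees (V - set (labels S))" "largest_leaf (prune k T) \<le> k"
        using dec_planar_tree_decompose[OF _ assms] by blast
      then show "y \<in> ?Sigma" by (simp add: detach_def)
    qed
  qed
qed

lemma card_largest_leaf_less:
  assumes "finite V" "k \<in> V"
  shows "card {T \<in> dec_planar_trees V. largest_leaf T < k} =
    (\<Sum>A\<in>Pow {x \<in> V. x < k}.
       card (dec_planar_trees A) * card {T \<in> dec_planar_trees (V - A). largest_leaf T \<le> k})"
proof -
  have "finite (dec_planar_trees A \<times> {T \<in> dec_planar_trees (V - A). largest_leaf T \<le> k})"
    if "A \<subseteq> V" for A
    using assms(1) that finite_subset[OF that]
    by (simp add: finite_dec_planar_trees finite_cartesian_product)
  then have finite_parts: "finite (Pow {x \<in> V. x < k})"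
    "\<forall>A\<in>Pow {x \<in> V. x < k}. finite (dec_planar_trees A \<times>
       {T \<in> dec_planar_trees (V - A). largest_leaf T \<le> k})"
    using assms(1) by auto
  show ?thesis
    using bij_betw_same_card[OF bij_betw_graft[OF assms(2)]] card_SigmaI[OF finite_parts]
    by (simp add: card_cartesian_product)
qed

lemma sum_Pow_card:
  fixes g :: "nat \<Rightarrow> 'a::comm_semiring_1"
  assumes "finite S"
  shows "(\<Sum>A\<in>Pow S. g (card A)) = (\<Sum>a\<le>card S. of_nat (card S choose a) * g a)"
proof -
  have "(\<Sum>A\<in>Pow S. g (card A)) = (\<Sum>a\<le>card S. \<Sum>A\<in>{A \<in> Pow S. card A = a}. g (card A))"
    using assms by (intro sum.group[symmetric]) (auto intro: card_mono)
  also have "\<dots> = (\<Sum>a\<le>card S. of_nat (card {A. A \<subseteq> S \<and> card A = a}) * g a)"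
    by (intro sum.cong) auto
  finally show ?thesis using n_subsets[OF assms] by simp
qed

lemma card_largest_leaf_le_complement:
  assumes A: "A \<subseteq> {1..<k}" and k: "k \<in> {1..n}"
  shows "card {T \<in> dec_planar_trees ({1..n} - A). largest_leaf T \<le> k} = d (n - card A) (k - card A)"
proof -
  have finite: "finite A" using A finite_subset by blast
  have "{y \<in> {1..n} - A. y \<le> k} = {1..k} - A" "A \<subseteq> {1..k}" using A k by auto
  then have "rank ({1..n} - A) k = k - card A"
    using finite by (simp add: rank_def card_Diff_subset)
  moreover have "card ({1..n} - A) = n - card A"
    using A k finite by (subst card_Diff_subset) auto
  moreover have "k \<in> {1..n} - A" using A k by auto
  ultimately show ?thesis using card_largest_leaf_le_eq_d[of "{1..n} - A" k] by simp
qed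

lemma card_interval_largest_leaf_less:
  assumes k: "k \<in> {1..n}"
  shows "card {T \<in> dec_planar_trees {1..n}. largest_leaf T < k} =
    (\<Sum>A\<in>Pow {1..<k}. d (card A) (card A) * d (n - card A) (k - card A))"
proof -
  have "{x \<in> {1..n}. x < k} = {1..<k}" using k by auto
  then have "card {T \<in> dec_planar_trees {1..n}. largest_leaf T < k} = (\<Sum>A\<in>Pow {1..<k}.
      card (dec_planar_trees A) * card {T \<in> dec_planar_trees ({1..n} - A). largest_leaf T \<le> k})"
    using card_largest_leaf_less[OF _ k] by simp
  also have "\<dots> = (\<Sum>A\<in>Pow {1..<k}. d (card A) (card A) * d (n - card A) (k - card A))"
  proof (rule sum.cong)
    fix A assume "A \<in> Pow {1..<k}"
    then show "card (dec_planar_trees A) *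
        card {T \<in> dec_planar_trees ({1..n} - A). largest_leaf T \<le> k}
        = d (card A) (card A) * d (n - card A) (k - card A)"
      using card_dec_planar_trees_eq_d[OF finite_subset] card_largest_leaf_le_complement[OF _ k]
      by simp
  qed simp
  finally show ?thesis .
qed

theorem lemma11p2:
  fixes n k :: nat
  assumes "2 \<le> k" and "k \<le> n"
  shows "d n (k - 1) =
         (\<Sum>a = 1..k - 1. ((k - 1) choose a) * d a a * d (n - a) (k - a))"
proof -
  have "k - 1 \<in> {1..n}" using assms by auto
  then have "d n (k - 1) = card {T \<in> dec_planar_trees {1..n}. largest_leaf T \<le> k - 1}"
    by (simp add: d_def)
  also have "\<dots> = card {T \<in> dec_planar_trees {1..n}. largest_leaf T < k}"
    using assms by (intro arg_cong[where f = card]) auto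
  also have "\<dots> = (\<Sum>A\<in>Pow {1..<k}. d (card A) (card A) * d (n - card A) (k - card A))"
    using assms by (intro card_interval_largest_leaf_less) auto
  also have "\<dots> = (\<Sum>a\<le>k - 1. ((k - 1) choose a) * (d a a * d (n - a) (k - a)))"
    using sum_Pow_card[of "{1..<k}" "\<lambda>a. d a a * d (n - a) (k - a)"] by simp
  also have "\<dots> = (\<Sum>a = 1..k - 1. ((k - 1) choose a) * d a a * d (n - a) (k - a))"
    by (simp add: atMost_atLeast0 sum.atLeast_Suc_atMost mult.assoc d_def)
  finally show ?thesis .
qed

end
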